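(* Let $f=\frac1n\sum_{i=1}^n f_i$ be $L$-smooth and each $f_i$ be $L_i$-smooth, with $\widetilde L=\sqrt{\frac1n\sum_i L_i^2}$. Let the iterates be generated by Algorithm EControl (described in the context) with $\eta=\frac{\delta}{4k}$ for some $k\ge1$ and stepsize $\gamma\le\frac{\delta}{32\sqrt2\,\widetilde L}$. With $E_t=\frac1n\sum_i\mathbb{E}\|e_t^i\|^2$ and $H_t=\frac1n\sum_i\mathbb{E}\|\eta e_t^i+g_t^i-h_t^i\|^2$, for every $t\ge0$, $$H_{t+1}\le\left(1-\frac\delta{32}\right)H_t+\left(\frac{8\delta^3}{k^44^4}+\frac{128\widetilde L^2\gamma^2\delta}{k^24^2}\right)E_t+\frac{128\widetilde L^2\gamma^2}{\delta}\mathbb{E}\|\nabla f(x_t)\|^2+\frac{64}{\delta}\left(1+\frac{\widetilde L^2\gamma^2}{n}\right)\sigma^2.$$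
   Context: $\mathcal{C}_\delta$ ($0<\delta\le1$) is a possibly randomized map with $\mathbb{E}\|\mathcal{C}_\delta(x)-x\|^2\le(1-\delta)\|x\|^2$ for all $x$, independent randomness at each call. Stochastic gradient oracles $g^i(x)$ of $f_i$ satisfy $\mathbb{E}[g^i(x)]=\nabla f_i(x)$, $\mathbb{E}\|g^i(x)-\nabla f_i(x)\|^2\le\sigma^2$, fresh independent randomness per call. $L$-smooth means $L$-Lipschitz gradient. Algorithm EControl: input $x_0$, $\gamma>0$, $\eta>0$, $e_0^i=0$, $h_0^i=g^i(x_0)$, $h_0=\frac1n\sum_i h_0^i$. For $t=0,1,\dots$: $g_t^i=g^i(x_t)$, $\Delta_t^i=\mathcal{C}_\delta(\eta e_t^i+g_t^i-h_t^i)$, $e_{t+1}^i=e_t^i+g_t^i-h_t^i-\Delta_t^i$, $h_{t+1}^i=h_t^i+\Delta_t^i$; $x_{t+1}=x_t-\gamma h_t-\frac\gamma n\sum_i\Delta_t^i$, $h_{t+1}=h_t+\frac1n\sum_i\Delta_t^i$. *)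

theory Defs
  imports "HOL-Probability.Probability"
begin

text \<open>Indices of the independent random seeds used by Algorithm EControl:
  Init i   : oracle call of worker i producing h_0^i = g^i(x_0)
  Grad t i : oracle call of worker i producing g_t^i = g^i(x_t)
  Comp t i : call of the compressor by worker i at step t.\<close>
datatype seed_idx = Init nat | Grad nat nat | Comp nat nat

text \<open>State of EControl at time t: (x_t, e_t, h_t (per worker), h_t (aggregate)),
  as a deterministic function of the seeds z.  C s v is the compressor applied to v
  with randomness s; G i w x is the stochastic gradient oracle of worker i at x
  with randomness w.\<close>
fun ec_state ::
  "nat \<Rightarrow> real \<Rightarrow> real \<Rightarrow> ('r \<Rightarrow> 'v \<Rightarrow> 'v) \<Rightarrow> (nat \<Rightarrow> 'r \<Rightarrow> 'v \<Rightarrow> 'v) \<Rightarrow> 'v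
    \<Rightarrow> (seed_idx \<Rightarrow> 'r) \<Rightarrow> nat \<Rightarrow> 'v \<times> (nat \<Rightarrow> 'v) \<times> (nat \<Rightarrow> 'v) \<times> 'v::real_vector"
where
  "ec_state n \<gamma> \<eta> C G x0 z 0 =
     (x0, (\<lambda>i. 0), (\<lambda>i. G i (z (Init i)) x0),
      (1 / real n) *\<^sub>R (\<Sum>i<n. G i (z (Init i)) x0))"
| "ec_state n \<gamma> \<eta> C G x0 z (Suc t) =
     (case ec_state n \<gamma> \<eta> C G x0 z t of (x, e, h, hb) \<Rightarrow>
       (let g = (\<lambda>i. G i (z (Grad t i)) x);
            D = (\<lambda>i. C (z (Comp t i)) (\<eta> *\<^sub>R e i + g i - h i))
        in (x - \<gamma> *\<^sub>R hb - (\<gamma> / real n) *\<^sub>R (\<Sum>i<n. D i),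
            (\<lambda>i. e i + g i - h i - D i),
            (\<lambda>i. h i + D i),
            hb + (1 / real n) *\<^sub>R (\<Sum>i<n. D i))))"

definition ec_x where
  "ec_x n \<gamma> \<eta> C G x0 z t = fst (ec_state n \<gamma> \<eta> C G x0 z t)"
definition ec_e where
  "ec_e n \<gamma> \<eta> C G x0 z t i = fst (snd (ec_state n \<gamma> \<eta> C G x0 z t)) i"
definition ec_h where
  "ec_h n \<gamma> \<eta> C G x0 z t i = fst (snd (snd (ec_state n \<gamma> \<eta> C G x0 z t))) i"
definition ec_g where
  "ec_g n \<gamma> \<eta> C G x0 z t i = G i (z (Grad t i)) (ec_x n \<gamma> \<eta> C G x0 z t)"

definition seed_distr :: "'r measure \<Rightarrow> (nat \<Rightarrow> 'r measure) \<Rightarrow> seed_idx \<Rightarrow> 'r measure" where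
  "seed_distr \<mu> \<nu> j = (case j of Comp t i \<Rightarrow> \<mu> | Grad t i \<Rightarrow> \<nu> i | Init i \<Rightarrow> \<nu> i)"

end

theory Submission
  imports Defs
begin

(* Write v = \<eta> e + g - h for the compressor input of a worker, r = v - \<Delta> for the
   compression residual and \<xi> = g - \<nabla>f_i(x) for the oracle noise. The update rules give
     v_{t+1} = (1 + \<eta>) r_t - \<eta>^2 e_t - \<xi>_t + (\<nabla>f_i(x_{t+1}) - \<nabla>f_i(x_t)) + \<xi>_{t+1}.
   The fresh noise \<xi>_{t+1} is centred and independent of everything else, so it only adds
   \<sigma>^2; the residual satisfies E|r_t|^2 <= (1 - \<delta>) E|v_t|^2 because the compressor seed of
   step t is independent of v_t; and the gradient difference is at most L_i \<gamma> |h_{t+1}|, where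
   the mean h_{t+1} = \<nabla>f(x_t) + mean \<xi>_t + \<eta> mean e_t - mean r_t. Young's inequality and
   2048 \<gamma>^2 L^2 <= \<delta>^2 then yield the contraction factor 1 - \<delta>/32. Independence enters
   through the product law of the seeds: each expectation is computed by first integrating out
   the one seed drawn at that moment, on which the other quantities do not depend. *)

section \<open>Elementary inequalities\<close>

lemma norm_add_power2_le:
  fixes a b :: "'a::real_normed_vector"
  assumes "s > 0"
  shows "(norm (a + b))\<^sup>2 \<le> (1 + s) * (norm a)\<^sup>2 + (1 + 1 / s) * (norm b)\<^sup>2"
proof -
  have "(norm (a + b))\<^sup>2 \<le> (norm a + norm b)\<^sup>2"
    by (intro power_mono norm_triangle_ineq) auto
  also have "\<dots> \<le> (1 + s) * (norm a)\<^sup>2 + (1 + 1 / s) * (norm b)\<^sup>2"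
  proof -
    have "0 \<le> (s * norm a - norm b)\<^sup>2 / s" using assms by simp
    then show ?thesis using assms by (simp add: field_simps power2_eq_square)
  qed
  finally show ?thesis .
qed

lemma norm_add_power2_le_2:
  fixes a b :: "'a::real_normed_vector"
  shows "(norm (a + b))\<^sup>2 \<le> 2 * (norm a)\<^sup>2 + 2 * (norm b)\<^sup>2"
  using norm_add_power2_le[of 1 a b] by simp

lemma norm_add4_power2_le_4:
  fixes a b c d :: "'a::real_normed_vector"
  shows "(norm (a + b + c + d))\<^sup>2 \<le> 4 * (norm a)\<^sup>2 + 4 * (norm b)\<^sup>2 + 4 * (norm c)\<^sup>2 + 4 * (norm d)\<^sup>2"
proof -
  have "(norm ((a + b) + (c + d)))\<^sup>2 \<le> 2 * (norm (a + b))\<^sup>2 + 2 * (norm (c + d))\<^sup>2"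
    by (rule norm_add_power2_le_2)
  also have "\<dots> \<le> 2 * (2 * (norm a)\<^sup>2 + 2 * (norm b)\<^sup>2) + 2 * (2 * (norm c)\<^sup>2 + 2 * (norm d)\<^sup>2)"
    by (intro add_mono mult_left_mono norm_add_power2_le_2) simp_all
  finally show ?thesis by (simp add: add.assoc)
qed

lemma norm_add4_power2_le_delta:
  fixes a b c d :: "'a::real_normed_vector"
  assumes "0 < \<delta>" "\<delta> \<le> 1"
  shows "(norm (a + b + c + d))\<^sup>2
    \<le> (1 + \<delta> / 4) * (norm a)\<^sup>2 + 8 / \<delta> * (norm b)\<^sup>2 + 40 / \<delta> * (norm c)\<^sup>2 + 20 / \<delta> * (norm d)\<^sup>2"
proof -
  have cd: "(norm (c + d))\<^sup>2 \<le> 3 * (norm c)\<^sup>2 + 3 / 2 * (norm d)\<^sup>2"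
    using norm_add_power2_le[of 2 c d] by simp
  have "(norm (b + (c + d)))\<^sup>2 \<le> 8 / 5 * (norm b)\<^sup>2 + 8 / 3 * (norm (c + d))\<^sup>2"
    using norm_add_power2_le[of "3 / 5" b "c + d"] by simp
  with cd have bcd: "(norm (b + (c + d)))\<^sup>2 \<le> 8 / 5 * (norm b)\<^sup>2 + 8 * (norm c)\<^sup>2 + 4 * (norm d)\<^sup>2"
    by simp
  have "(norm (a + (b + (c + d))))\<^sup>2 \<le> (1 + \<delta> / 4) * (norm a)\<^sup>2 + (1 + 4 / \<delta>) * (norm (b + (c + d)))\<^sup>2"
    using norm_add_power2_le[of "\<delta> / 4" a "b + (c + d)"] assms by simp
  also have "(1 + 4 / \<delta>) * (norm (b + (c + d)))\<^sup>2 \<le> 5 / \<delta> * (norm (b + (c + d)))\<^sup>2"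
    using assms by (intro mult_right_mono) (simp_all add: field_simps)
  also have "\<dots> \<le> 5 / \<delta> * (8 / 5 * (norm b)\<^sup>2 + 8 * (norm c)\<^sup>2 + 4 * (norm d)\<^sup>2)"
    using bcd assms by (intro mult_left_mono) auto
  finally show ?thesis
    using assms by (simp add: add.assoc field_simps)
qed

lemma norm_sum_power2_le:
  fixes u :: "'i \<Rightarrow> 'a::real_normed_vector"
  shows "(norm (\<Sum>j\<in>J. u j))\<^sup>2 \<le> card J * (\<Sum>j\<in>J. (norm (u j))\<^sup>2)"
proof -
  have "(norm (\<Sum>j\<in>J. u j))\<^sup>2 \<le> (\<Sum>j\<in>J. norm (u j))\<^sup>2"
    by (intro power_mono norm_sum) simp
  also have "\<dots> \<le> card J * (\<Sum>j\<in>J. (norm (u j))\<^sup>2)"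
    using sum_squared_le_sum_of_squares[of "\<lambda>j. norm (u j)" J] by (simp add: mult.commute)
  finally show ?thesis .
qed

lemma norm_mean_power2_le:
  fixes u :: "nat \<Rightarrow> 'a::real_normed_vector"
  shows "(norm ((1 / real n) *\<^sub>R (\<Sum>j<n. u j)))\<^sup>2 \<le> 1 / real n * (\<Sum>j<n. (norm (u j))\<^sup>2)"
proof (cases "n = 0")
  case False
  have "(norm ((1 / real n) *\<^sub>R (\<Sum>j<n. u j)))\<^sup>2 = (norm (\<Sum>j<n. u j))\<^sup>2 / (real n)\<^sup>2"
    by (simp add: power_divide)
  also have "\<dots> \<le> real n * (\<Sum>j<n. (norm (u j))\<^sup>2) / (real n)\<^sup>2"
    using norm_sum_power2_le[of u "{..<n}"] by (intro divide_right_mono) auto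
  also have "\<dots> = 1 / real n * (\<Sum>j<n. (norm (u j))\<^sup>2)"
    using False by (simp add: power2_eq_square)
  finally show ?thesis .
qed simp

section \<open>Measurability and integration\<close>

lemma nn_integral_ennreal_mean:
  assumes "\<And>i. i < n \<Longrightarrow> F i \<in> borel_measurable M" and "\<And>i x. i < n \<Longrightarrow> 0 \<le> F i x"
  shows "(\<integral>\<^sup>+x. ennreal (1 / real n * (\<Sum>i<n. F i x)) \<partial>M)
    = ennreal (1 / real n) * (\<Sum>i<n. \<integral>\<^sup>+x. ennreal (F i x) \<partial>M)"
proof -
  have "ennreal (1 / real n * (\<Sum>i<n. F i x)) = ennreal (1 / real n) * (\<Sum>i<n. ennreal (F i x))" for x
    using assms(2) by (subst ennreal_mult', simp, subst sum_ennreal) auto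
  then have "(\<integral>\<^sup>+x. ennreal (1 / real n * (\<Sum>i<n. F i x)) \<partial>M)
      = (\<integral>\<^sup>+x. ennreal (1 / real n) * (\<Sum>i<n. ennreal (F i x)) \<partial>M)"
    by simp
  also have "\<dots> = ennreal (1 / real n) * (\<Sum>i<n. \<integral>\<^sup>+x. ennreal (F i x) \<partial>M)"
    using assms(1) by (subst nn_integral_cmult, measurable, subst nn_integral_sum) auto
  finally show ?thesis .
qed

lemma lipschitz_bound_borel_measurable:
  fixes g :: "'a::metric_space \<Rightarrow> 'b::metric_space"
  assumes "\<And>x y. dist (g x) (g y) \<le> K * dist x y"
  shows "g \<in> borel_measurable borel"
proof -
  have "(max 0 K)-lipschitz_on UNIV g"
  proof (rule lipschitz_onI)
    show "dist (g x) (g y) \<le> max 0 K * dist x y" for x y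
      by (rule order_trans[OF assms]) (simp add: mult_right_mono)
  qed simp
  then show ?thesis
    by (intro borel_measurable_continuous_onI lipschitz_on_continuous_on)
qed

lemma nn_integral_norm_add_centered_le:
  fixes \<xi> :: "'r \<Rightarrow> 'v::{real_inner, banach, second_countable_topology}"
  assumes N: "prob_space N"
    and int: "integrable N \<xi>" and centered: "(\<integral>w. \<xi> w \<partial>N) = 0"
    and var: "(\<integral>\<^sup>+ w. ennreal ((norm (\<xi> w))\<^sup>2) \<partial>N) \<le> ennreal (\<sigma>\<^sup>2)"
  shows "(\<integral>\<^sup>+ w. ennreal ((norm (a + \<xi> w))\<^sup>2) \<partial>N) \<le> ennreal ((norm a)\<^sup>2 + \<sigma>\<^sup>2)"
proof -
  interpret N: prob_space N by (rule N)
  have sq_int: "integrable N (\<lambda>w. (norm (\<xi> w))\<^sup>2)"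
  proof (rule integrableI_bounded)
    show "(\<lambda>w. (norm (\<xi> w))\<^sup>2) \<in> borel_measurable N"
      using borel_measurable_integrable[OF int] by measurable
    show "(\<integral>\<^sup>+ w. ennreal (norm ((norm (\<xi> w))\<^sup>2)) \<partial>N) < \<infinity>"
      using var by (simp add: le_less_trans)
  qed
  have "ennreal (\<integral>w. (norm (\<xi> w))\<^sup>2 \<partial>N) = (\<integral>\<^sup>+ w. ennreal ((norm (\<xi> w))\<^sup>2) \<partial>N)"
    by (rule nn_integral_eq_integral[symmetric, OF sq_int]) auto
  with var have "ennreal (\<integral>w. (norm (\<xi> w))\<^sup>2 \<partial>N) \<le> ennreal (\<sigma>\<^sup>2)"
    by simp
  then have sq_le: "(\<integral>w. (norm (\<xi> w))\<^sup>2 \<partial>N) \<le> \<sigma>\<^sup>2"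
    by (simp add: ennreal_le_iff)
  have expand: "(norm (a + \<xi> w))\<^sup>2 = (norm a)\<^sup>2 + 2 * (a \<bullet> \<xi> w) + (norm (\<xi> w))\<^sup>2" for w
    by (simp add: power2_norm_eq_inner inner_add_left inner_add_right inner_commute)
  have "(\<integral>\<^sup>+ w. ennreal ((norm (a + \<xi> w))\<^sup>2) \<partial>N)
      = (\<integral>\<^sup>+ w. ennreal ((norm a)\<^sup>2 + 2 * (a \<bullet> \<xi> w) + (norm (\<xi> w))\<^sup>2) \<partial>N)"
    by (simp only: expand)
  also have "\<dots> = ennreal (\<integral>w. (norm a)\<^sup>2 + 2 * (a \<bullet> \<xi> w) + (norm (\<xi> w))\<^sup>2 \<partial>N)"
  proof (rule nn_integral_eq_integral)
    show "integrable N (\<lambda>w. (norm a)\<^sup>2 + 2 * (a \<bullet> \<xi> w) + (norm (\<xi> w))\<^sup>2)"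
      using int sq_int by auto
  qed (auto simp: expand[symmetric])
  also have "(\<integral>w. (norm a)\<^sup>2 + 2 * (a \<bullet> \<xi> w) + (norm (\<xi> w))\<^sup>2 \<partial>N)
      = (norm a)\<^sup>2 + (\<integral>w. (norm (\<xi> w))\<^sup>2 \<partial>N)"
    using int sq_int centered by (simp add: N.prob_space)
  finally show ?thesis
    using sq_le by (simp add: ennreal_leI)
qed

lemma nn_integral_PiM_split_coordinate:
  fixes D :: "'i \<Rightarrow> 'r measure" and H :: "('i \<Rightarrow> 'r) \<Rightarrow> ennreal"
  assumes D: "\<And>j. prob_space (D j)" and H: "H \<in> borel_measurable (PiM UNIV D)"
  shows "(\<integral>\<^sup>+z. H z \<partial>PiM UNIV D) = (\<integral>\<^sup>+X. (\<integral>\<^sup>+x. H (X(k := x)) \<partial>D k) \<partial>PiM (UNIV - {k}) D)"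
proof -
  let ?I = "UNIV - {k}"
  let ?u = "\<lambda>(x, X). X(k := x)"
  interpret Dk: prob_space "D k" by (rule D)
  interpret PI: prob_space "PiM ?I D" by (rule prob_space_PiM) (use D in auto)
  interpret Q: pair_sigma_finite "D k" "PiM ?I D" ..
  have u: "?u \<in> measurable (D k \<Otimes>\<^sub>M PiM ?I D) (PiM UNIV D)"
    using measurable_fun_upd[where J="?I" and I=UNIV and M=D and i=k, of "snd" _ fst]
    by (simp add: case_prod_beta')
  have "(\<integral>\<^sup>+z. H z \<partial>PiM UNIV D) = (\<integral>\<^sup>+z. H z \<partial>distr (D k \<Otimes>\<^sub>M PiM ?I D) (PiM UNIV D) ?u)"
    using distr_pair_PiM_eq_PiM[of ?I D k] D by (simp add: insert_Diff_single)
  also have "\<dots> = (\<integral>\<^sup>+p. H (?u p) \<partial>(D k \<Otimes>\<^sub>M PiM ?I D))"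
    using H by (intro nn_integral_distr[OF u]) simp
  also have "\<dots> = (\<integral>\<^sup>+X. (\<integral>\<^sup>+x. H (?u (x, X)) \<partial>D k) \<partial>PiM ?I D)"
    by (rule Q.nn_integral_snd[symmetric]) (rule measurable_compose[OF u H])
  finally show ?thesis by simp
qed

lemma nn_integral_PiM_le_by_coordinate:
  fixes D :: "'i \<Rightarrow> 'r measure" and F B :: "('i \<Rightarrow> 'r) \<Rightarrow> ennreal"
  assumes D: "\<And>j. prob_space (D j)"
    and F: "F \<in> borel_measurable (PiM UNIV D)" and B: "B \<in> borel_measurable (PiM UNIV D)"
    and inner: "\<And>z. z \<in> space (PiM UNIV D) \<Longrightarrow> (\<integral>\<^sup>+x. F (z(k := x)) \<partial>D k) \<le> B z"
    and B_indep: "\<And>z x. z \<in> space (PiM UNIV D) \<Longrightarrow> x \<in> space (D k) \<Longrightarrow> B (z(k := x)) = B z"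
  shows "(\<integral>\<^sup>+z. F z \<partial>PiM UNIV D) \<le> (\<integral>\<^sup>+z. B z \<partial>PiM UNIV D)"
proof -
  interpret Dk: prob_space "D k" by (rule D)
  obtain x0 where x0: "x0 \<in> space (D k)" using Dk.not_empty by blast
  have "(\<integral>\<^sup>+x. F (X(k := x)) \<partial>D k) \<le> (\<integral>\<^sup>+x. B (X(k := x)) \<partial>D k)"
    if X: "X \<in> space (PiM (UNIV - {k}) D)" for X
  proof -
    have z0: "X(k := x0) \<in> space (PiM UNIV D)"
      using x0 X by (auto simp: space_PiM PiE_iff)
    have "(\<integral>\<^sup>+x. F (X(k := x)) \<partial>D k) = (\<integral>\<^sup>+x. F ((X(k := x0))(k := x)) \<partial>D k)" by simp
    also have "\<dots> \<le> B (X(k := x0))" by (rule inner[OF z0])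
    also have "\<dots> = (\<integral>\<^sup>+x. B (X(k := x)) \<partial>D k)"
      using B_indep[OF z0] by (simp add: Dk.emeasure_space_1 cong: nn_integral_cong)
    finally show ?thesis .
  qed
  then show ?thesis
    unfolding nn_integral_PiM_split_coordinate[OF D F, of k] nn_integral_PiM_split_coordinate[OF D B, of k]
    by (rule nn_integral_mono) blast
qed

lemma indep_vars_law_PiM:
  assumes M: "prob_space M" and indep: "prob_space.indep_vars M D Z UNIV"
    and distr: "\<And>j. distr M (D j) (Z j) = D j"
  shows "(\<lambda>\<omega> j. Z j \<omega>) \<in> measurable M (PiM UNIV D)"
    and "distr M (PiM UNIV D) (\<lambda>\<omega> j. Z j \<omega>) = PiM UNIV D"
    and "prob_space (D j)"
proof -
  interpret M: prob_space M by (rule M)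
  have Z: "Z j \<in> measurable M (D j)" for j
    using indep unfolding M.indep_vars_def by auto
  show "(\<lambda>\<omega> j. Z j \<omega>) \<in> measurable M (PiM UNIV D)"
    using measurable_restrict[of UNIV Z M D] Z by (simp add: restrict_UNIV)
  show "distr M (PiM UNIV D) (\<lambda>\<omega> j. Z j \<omega>) = PiM UNIV D"
    using M.indep_vars_iff_distr_eq_PiM[of UNIV Z D] Z indep distr by (simp add: restrict_UNIV)
  show "prob_space (D j)"
    using M.prob_space_distr[OF Z[of j]] distr[of j] by simp
qed

section \<open>The iterates of EControl\<close>

definition ec_hb where
  "ec_hb n \<gamma> \<eta> C G x0 z t = snd (snd (snd (ec_state n \<gamma> \<eta> C G x0 z t)))"

definition ec_delta where
  "ec_delta n \<gamma> \<eta> C G x0 z t i = C (z (Comp t i))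
     (\<eta> *\<^sub>R ec_e n \<gamma> \<eta> C G x0 z t i + ec_g n \<gamma> \<eta> C G x0 z t i - ec_h n \<gamma> \<eta> C G x0 z t i)"

lemma ec_state_Suc_eq:
  "ec_state n \<gamma> \<eta> C G x0 z (Suc t) =
    (ec_x n \<gamma> \<eta> C G x0 z t - \<gamma> *\<^sub>R ec_hb n \<gamma> \<eta> C G x0 z t
       - (\<gamma> / real n) *\<^sub>R (\<Sum>i<n. ec_delta n \<gamma> \<eta> C G x0 z t i),
     (\<lambda>i. ec_e n \<gamma> \<eta> C G x0 z t i + ec_g n \<gamma> \<eta> C G x0 z t i - ec_h n \<gamma> \<eta> C G x0 z t i
            - ec_delta n \<gamma> \<eta> C G x0 z t i),
     (\<lambda>i. ec_h n \<gamma> \<eta> C G x0 z t i + ec_delta n \<gamma> \<eta> C G x0 z t i),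
     ec_hb n \<gamma> \<eta> C G x0 z t + (1 / real n) *\<^sub>R (\<Sum>i<n. ec_delta n \<gamma> \<eta> C G x0 z t i))"
  by (simp add: ec_x_def ec_e_def ec_h_def ec_hb_def ec_delta_def ec_g_def split_beta Let_def)

lemma ec_x_Suc:
  "ec_x n \<gamma> \<eta> C G x0 z (Suc t) = ec_x n \<gamma> \<eta> C G x0 z t - \<gamma> *\<^sub>R ec_hb n \<gamma> \<eta> C G x0 z t
     - (\<gamma> / real n) *\<^sub>R (\<Sum>i<n. ec_delta n \<gamma> \<eta> C G x0 z t i)"
  by (subst ec_x_def, subst ec_state_Suc_eq) simp

lemma ec_e_Suc:
  "ec_e n \<gamma> \<eta> C G x0 z (Suc t) i = ec_e n \<gamma> \<eta> C G x0 z t i + ec_g n \<gamma> \<eta> C G x0 z t i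
     - ec_h n \<gamma> \<eta> C G x0 z t i - ec_delta n \<gamma> \<eta> C G x0 z t i"
  by (subst ec_e_def, subst ec_state_Suc_eq) simp

lemma ec_h_Suc:
  "ec_h n \<gamma> \<eta> C G x0 z (Suc t) i = ec_h n \<gamma> \<eta> C G x0 z t i + ec_delta n \<gamma> \<eta> C G x0 z t i"
  by (subst ec_h_def, subst ec_state_Suc_eq) simp

lemma ec_hb_Suc:
  "ec_hb n \<gamma> \<eta> C G x0 z (Suc t) =
     ec_hb n \<gamma> \<eta> C G x0 z t + (1 / real n) *\<^sub>R (\<Sum>i<n. ec_delta n \<gamma> \<eta> C G x0 z t i)"
  by (subst ec_hb_def, subst ec_state_Suc_eq) simp

lemma ec_hb_eq_mean: "ec_hb n \<gamma> \<eta> C G x0 z t = (1 / real n) *\<^sub>R (\<Sum>i<n. ec_h n \<gamma> \<eta> C G x0 z t i)"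
proof (induction t)
  case 0
  then show ?case by (simp add: ec_hb_def ec_h_def)
next
  case (Suc t)
  then show ?case by (simp add: ec_hb_Suc ec_h_Suc sum.distrib scaleR_right_distrib)
qed

fun later_seed :: "nat \<Rightarrow> seed_idx \<Rightarrow> bool" where
  "later_seed t (Init i) = False"
| "later_seed t (Grad s i) = (t \<le> s)"
| "later_seed t (Comp s i) = (t \<le> s)"

lemma ec_state_upd_later_seed:
  "later_seed t j \<Longrightarrow> ec_state n \<gamma> \<eta> C G x0 (z(j := a)) t = ec_state n \<gamma> \<eta> C G x0 z t"
proof (induction t)
  case 0
  then show ?case by (cases j) auto
next
  case (Suc t)
  then have "later_seed t j" "Grad t i \<noteq> j" "Comp t i \<noteq> j" for i
    by (cases j; auto)+
  with Suc.IH show ?case by (simp add: Let_def split_beta)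
qed

lemma ec_upd_later_seed:
  assumes "later_seed t j"
  shows "ec_x n \<gamma> \<eta> C G x0 (z(j := a)) t = ec_x n \<gamma> \<eta> C G x0 z t"
    and "ec_e n \<gamma> \<eta> C G x0 (z(j := a)) t i = ec_e n \<gamma> \<eta> C G x0 z t i"
    and "ec_h n \<gamma> \<eta> C G x0 (z(j := a)) t i = ec_h n \<gamma> \<eta> C G x0 z t i"
  by (simp_all add: ec_x_def ec_e_def ec_h_def ec_state_upd_later_seed[OF assms])

locale econtrol_run =
  fixes n :: nat and \<gamma> \<eta> :: real and C :: "'r \<Rightarrow> 'v \<Rightarrow> 'v::real_normed_vector"
    and G :: "nat \<Rightarrow> 'r \<Rightarrow> 'v \<Rightarrow> 'v" and x0 :: 'v and gradf :: "nat \<Rightarrow> 'v \<Rightarrow> 'v"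
begin

abbreviation "X z t \<equiv> ec_x n \<gamma> \<eta> C G x0 z t"
abbreviation "E z t i \<equiv> ec_e n \<gamma> \<eta> C G x0 z t i"
abbreviation "H z t i \<equiv> ec_h n \<gamma> \<eta> C G x0 z t i"
abbreviation "Hb z t \<equiv> ec_hb n \<gamma> \<eta> C G x0 z t"
abbreviation "Gt z t i \<equiv> ec_g n \<gamma> \<eta> C G x0 z t i"
abbreviation "Dl z t i \<equiv> ec_delta n \<gamma> \<eta> C G x0 z t i"

abbreviation "V z t i \<equiv> \<eta> *\<^sub>R E z t i + Gt z t i - H z t i"
abbreviation "R z t i \<equiv> V z t i - Dl z t i"
abbreviation "Xi z t i \<equiv> Gt z t i - gradf i (X z t)"
abbreviation "W z t i \<equiv> \<eta> *\<^sub>R E z t i - H z t i + gradf i (X z t)"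
abbreviation "GF z t \<equiv> (1 / real n) *\<^sub>R (\<Sum>i<n. gradf i (X z t))"

lemma W_Suc_eq:
  "W z (Suc t) i = (1 + \<eta>) *\<^sub>R R z t i + - (\<eta>\<^sup>2 *\<^sub>R E z t i) + - Xi z t i
     + (gradf i (X z (Suc t)) - gradf i (X z t))"
  by (simp add: ec_e_Suc ec_h_Suc algebra_simps power2_eq_square)

lemma Hb_Suc_eq:
  "Hb z (Suc t) = GF z t + (1 / real n) *\<^sub>R (\<Sum>i<n. Xi z t i)
     + \<eta> *\<^sub>R ((1 / real n) *\<^sub>R (\<Sum>i<n. E z t i)) + - ((1 / real n) *\<^sub>R (\<Sum>i<n. R z t i))"
proof -
  have "H z t i + Dl z t i = gradf i (X z t) + Xi z t i + \<eta> *\<^sub>R E z t i - R z t i" for i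
    by (simp add: algebra_simps)
  then have "(\<Sum>i<n. H z (Suc t) i) = (\<Sum>i<n. gradf i (X z t)) + (\<Sum>i<n. Xi z t i)
      + \<eta> *\<^sub>R (\<Sum>i<n. E z t i) - (\<Sum>i<n. R z t i)"
    by (simp only: ec_h_Suc sum.distrib sum_subtractf scaleR_sum_right)
  then show ?thesis
    by (simp add: ec_hb_eq_mean[of n \<gamma> \<eta> C G x0 z "Suc t"] scaleR_right_distrib scaleR_right_diff_distrib)
qed

lemma X_Suc_eq: "X z (Suc t) = X z t - \<gamma> *\<^sub>R Hb z (Suc t)"
  by (simp add: ec_x_Suc ec_hb_Suc algebra_simps)

lemma norm_Hb_Suc_power2_le:
  "(norm (Hb z (Suc t)))\<^sup>2 \<le> 4 * (norm (GF z t))\<^sup>2 + 4 * (1 / real n * (\<Sum>i<n. (norm (Xi z t i))\<^sup>2))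
     + 4 * (\<eta>\<^sup>2 * (1 / real n * (\<Sum>i<n. (norm (E z t i))\<^sup>2))) + 4 * (1 / real n * (\<Sum>i<n. (norm (R z t i))\<^sup>2))"
proof -
  have "(norm (\<eta> *\<^sub>R ((1 / real n) *\<^sub>R (\<Sum>i<n. E z t i))))\<^sup>2
      = \<eta>\<^sup>2 * (norm ((1 / real n) *\<^sub>R (\<Sum>i<n. E z t i)))\<^sup>2"
    by (simp only: norm_scaleR power_mult_distrib power2_abs)
  also have "\<dots> \<le> \<eta>\<^sup>2 * (1 / real n * (\<Sum>i<n. (norm (E z t i))\<^sup>2))"
    by (intro mult_left_mono norm_mean_power2_le) simp
  finally show ?thesis
    using norm_add4_power2_le_4[of "GF z t" "(1 / real n) *\<^sub>R (\<Sum>i<n. Xi z t i)"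
        "\<eta> *\<^sub>R ((1 / real n) *\<^sub>R (\<Sum>i<n. E z t i))" "- ((1 / real n) *\<^sub>R (\<Sum>i<n. R z t i))"]
      norm_mean_power2_le[of n "Xi z t"]
      norm_mean_power2_le[of n "R z t"] unfolding Hb_Suc_eq norm_minus_cancel
    by linarith
qed

lemma norm_W_Suc_power2_le:
  assumes \<delta>: "0 < \<delta>" "\<delta> \<le> 1"
    and Lip: "norm (gradf i (X z (Suc t)) - gradf i (X z t)) \<le> K * norm (X z (Suc t) - X z t)"
  shows "(norm (W z (Suc t) i))\<^sup>2 \<le> (1 + \<delta> / 4) * ((1 + \<eta>)\<^sup>2 * (norm (R z t i))\<^sup>2)
     + 8 / \<delta> * (\<eta> ^ 4 * (norm (E z t i))\<^sup>2) + 40 / \<delta> * (norm (Xi z t i))\<^sup>2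
     + 20 / \<delta> * (K\<^sup>2 * (\<gamma>\<^sup>2 * (norm (Hb z (Suc t)))\<^sup>2))"
proof -
  let ?d = "gradf i (X z (Suc t)) - gradf i (X z t)"
  have "norm ?d \<le> K * (\<bar>\<gamma>\<bar> * norm (Hb z (Suc t)))"
    using Lip by (simp add: X_Suc_eq)
  then have "(norm ?d)\<^sup>2 \<le> (K * (\<bar>\<gamma>\<bar> * norm (Hb z (Suc t))))\<^sup>2"
    by (intro power_mono) auto
  then have d: "20 / \<delta> * (norm ?d)\<^sup>2 \<le> 20 / \<delta> * (K\<^sup>2 * (\<gamma>\<^sup>2 * (norm (Hb z (Suc t)))\<^sup>2))"
    using \<delta> by (intro mult_left_mono) (simp_all add: power_mult_distrib)
  have "(norm ((1 + \<eta>) *\<^sub>R R z t i))\<^sup>2 = (1 + \<eta>)\<^sup>2 * (norm (R z t i))\<^sup>2"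
    and "(norm (- (\<eta>\<^sup>2 *\<^sub>R E z t i)))\<^sup>2 = \<eta> ^ 4 * (norm (E z t i))\<^sup>2"
    by (simp_all add: power_mult_distrib power2_eq_square eval_nat_numeral)
  moreover have "(norm (W z (Suc t) i))\<^sup>2 \<le> (1 + \<delta> / 4) * (norm ((1 + \<eta>) *\<^sub>R R z t i))\<^sup>2
      + 8 / \<delta> * (norm (- (\<eta>\<^sup>2 *\<^sub>R E z t i)))\<^sup>2 + 40 / \<delta> * (norm (- Xi z t i))\<^sup>2
      + 20 / \<delta> * (norm ?d)\<^sup>2"
    unfolding W_Suc_eq by (rule norm_add4_power2_le_delta[OF \<delta>])
  ultimately show ?thesis
    using d by (simp only: norm_minus_cancel)
qed

lemma mean_W_Suc_power2_le:
  assumes \<delta>: "0 < \<delta>" "\<delta> \<le> 1"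
    and Lip: "\<And>i x y. i < n \<Longrightarrow> norm (gradf i x - gradf i y) \<le> Li i * norm (x - y)"
  defines "L2 \<equiv> 1 / real n * (\<Sum>i<n. (Li i)\<^sup>2)"
  shows "1 / real n * (\<Sum>i<n. (norm (W z (Suc t) i))\<^sup>2)
    \<le> ((1 + \<delta> / 4) * (1 + \<eta>)\<^sup>2 + 80 * \<gamma>\<^sup>2 * L2 / \<delta>) * (1 / real n * (\<Sum>i<n. (norm (R z t i))\<^sup>2))
      + (8 * \<eta> ^ 4 / \<delta> + 80 * \<gamma>\<^sup>2 * L2 * \<eta>\<^sup>2 / \<delta>) * (1 / real n * (\<Sum>i<n. (norm (E z t i))\<^sup>2))
      + (40 / \<delta> + 80 * \<gamma>\<^sup>2 * L2 / \<delta>) * (1 / real n * (\<Sum>i<n. (norm (Xi z t i))\<^sup>2))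
      + 80 * \<gamma>\<^sup>2 * L2 / \<delta> * (norm (GF z t))\<^sup>2"
proof -
  define mR where "mR = 1 / real n * (\<Sum>i<n. (norm (R z t i))\<^sup>2)"
  define mE where "mE = 1 / real n * (\<Sum>i<n. (norm (E z t i))\<^sup>2)"
  define mX where "mX = 1 / real n * (\<Sum>i<n. (norm (Xi z t i))\<^sup>2)"
  define hb where "hb = (norm (Hb z (Suc t)))\<^sup>2"
  define g where "g = (norm (GF z t))\<^sup>2"
  have mean_lin: "1 / real n * (\<Sum>i<n. p * (u * a i) + q * (v * b i) + r * c i + s * (l i * w))
      = p * u * (1 / real n * (\<Sum>i<n. a i)) + q * v * (1 / real n * (\<Sum>i<n. b i))
        + r * (1 / real n * (\<Sum>i<n. c i)) + s * (1 / real n * (\<Sum>i<n. l i)) * w"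
    for a b c l :: "nat \<Rightarrow> real" and p q r s u v w :: real
    by (simp add: sum.distrib sum_distrib_left sum_distrib_right sum_divide_distrib algebra_simps)
  have "1 / real n * (\<Sum>i<n. (norm (W z (Suc t) i))\<^sup>2)
      \<le> 1 / real n * (\<Sum>i<n. (1 + \<delta> / 4) * ((1 + \<eta>)\<^sup>2 * (norm (R z t i))\<^sup>2)
          + 8 / \<delta> * (\<eta> ^ 4 * (norm (E z t i))\<^sup>2) + 40 / \<delta> * (norm (Xi z t i))\<^sup>2
          + 20 / \<delta> * ((Li i)\<^sup>2 * (\<gamma>\<^sup>2 * hb)))"
    unfolding hb_def using \<delta> Lip by (intro mult_left_mono sum_mono norm_W_Suc_power2_le) auto
  also have "\<dots> = (1 + \<delta> / 4) * (1 + \<eta>)\<^sup>2 * mR + 8 / \<delta> * \<eta> ^ 4 * mE + 40 / \<delta> * mX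
      + 20 / \<delta> * L2 * (\<gamma>\<^sup>2 * hb)"
    unfolding mean_lin mR_def mE_def mX_def L2_def ..
  also have "20 / \<delta> * L2 * (\<gamma>\<^sup>2 * hb) \<le> 20 / \<delta> * L2 * (\<gamma>\<^sup>2 * (4 * g + 4 * mX + 4 * (\<eta>\<^sup>2 * mE) + 4 * mR))"
    using \<delta> norm_Hb_Suc_power2_le[of z t, folded hb_def g_def mR_def mE_def mX_def]
    by (intro mult_left_mono) (simp_all add: L2_def sum_nonneg)
  finally show ?thesis
    unfolding mR_def[symmetric] mE_def[symmetric] mX_def[symmetric] g_def[symmetric]
    by (simp add: algebra_simps)
qed

end

section \<open>Expectations under the seed distribution\<close>

locale econtrol = econtrol_run n \<gamma> \<eta> C G x0 gradf
  for n :: nat and \<gamma> \<eta> :: real and C :: "'r \<Rightarrow> 'v \<Rightarrow> 'v::euclidean_space"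
    and G :: "nat \<Rightarrow> 'r \<Rightarrow> 'v \<Rightarrow> 'v" and x0 :: 'v and gradf :: "nat \<Rightarrow> 'v \<Rightarrow> 'v" +
  fixes \<mu> :: "'r measure" and \<nu> :: "nat \<Rightarrow> 'r measure" and \<delta> \<sigma> :: real
  assumes seed_prob: "\<And>j. prob_space (seed_distr \<mu> \<nu> j)"
    and C_meas: "(\<lambda>(s, v). C s v) \<in> borel_measurable (\<mu> \<Otimes>\<^sub>M borel)"
    and G_meas: "\<And>i. i < n \<Longrightarrow> (\<lambda>(w, x). G i w x) \<in> borel_measurable (\<nu> i \<Otimes>\<^sub>M borel)"
    and C_contr: "\<And>v. (\<integral>\<^sup>+ s. ennreal ((norm (C s v - v))\<^sup>2) \<partial>\<mu>) \<le> ennreal ((1 - \<delta>) * (norm v)\<^sup>2)"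
    and G_int: "\<And>i x. i < n \<Longrightarrow> integrable (\<nu> i) (\<lambda>w. G i w x)"
    and G_unbiased: "\<And>i x. i < n \<Longrightarrow> (\<integral>w. G i w x \<partial>\<nu> i) = gradf i x"
    and G_var: "\<And>i x. i < n \<Longrightarrow>
           (\<integral>\<^sup>+ w. ennreal ((norm (G i w x - gradf i x))\<^sup>2) \<partial>\<nu> i) \<le> ennreal (\<sigma>\<^sup>2)"
    and gradf_meas: "\<And>i. i < n \<Longrightarrow> gradf i \<in> borel_measurable borel"
begin

abbreviation "P \<equiv> PiM UNIV (seed_distr \<mu> \<nu>)"

lemma prob_space_P: "prob_space P"
  by (rule prob_space_PiM) (rule seed_prob)

lemma prob_space_nu: "i < n \<Longrightarrow> prob_space (\<nu> i)"
  using seed_prob[of "Init i"] by (simp add: seed_distr_def)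

lemma measurable_seed:
  "(\<lambda>z. z (Init i)) \<in> measurable P (\<nu> i)"
  "(\<lambda>z. z (Grad t i)) \<in> measurable P (\<nu> i)"
  "(\<lambda>z. z (Comp t i)) \<in> measurable P \<mu>"
proof -
  have "(\<lambda>z. z j) \<in> measurable P (seed_distr \<mu> \<nu> j)" for j
    by (rule measurable_component_singleton) simp
  from this[of "Init i"] this[of "Grad t i"] this[of "Comp t i"] show
    "(\<lambda>z. z (Init i)) \<in> measurable P (\<nu> i)"
    "(\<lambda>z. z (Grad t i)) \<in> measurable P (\<nu> i)"
    "(\<lambda>z. z (Comp t i)) \<in> measurable P \<mu>"
    by (simp_all add: seed_distr_def)
qed

lemma measurable_G:
  assumes "i < n" "a \<in> measurable P (\<nu> i)" "b \<in> borel_measurable P"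
  shows "(\<lambda>z. G i (a z) (b z)) \<in> borel_measurable P"
  using measurable_compose[OF _ G_meas[OF assms(1)], of "\<lambda>z. (a z, b z)"] assms(2,3)
  by (simp add: measurable_Pair)

lemma measurable_C:
  assumes "a \<in> measurable P \<mu>" "b \<in> borel_measurable P"
  shows "(\<lambda>z. C (a z) (b z)) \<in> borel_measurable P"
  using measurable_compose[OF _ C_meas, of "\<lambda>z. (a z, b z)"] assms
  by (simp add: measurable_Pair)

lemma measurable_gradf:
  "i < n \<Longrightarrow> b \<in> borel_measurable P \<Longrightarrow> (\<lambda>z. gradf i (b z)) \<in> borel_measurable P"
  using measurable_compose[of b P borel "gradf i" borel] gradf_meas by blast

lemma measurable_state:
  "(\<lambda>z. X z t) \<in> borel_measurable P \<and> (\<lambda>z. Hb z t) \<in> borel_measurable P \<and>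
   (\<forall>i<n. (\<lambda>z. E z t i) \<in> borel_measurable P \<and> (\<lambda>z. H z t i) \<in> borel_measurable P)"
proof (induction t)
  case 0
  have "(\<lambda>z. G i (z (Init i)) x0) \<in> borel_measurable P" if "i < n" for i
    using measurable_G[OF that measurable_seed(1)] by simp
  then show ?case
    by (simp add: ec_x_def ec_e_def ec_h_def ec_hb_def)
next
  case (Suc t)
  then have x: "(\<lambda>z. X z t) \<in> borel_measurable P" and hb: "(\<lambda>z. Hb z t) \<in> borel_measurable P"
    and e: "\<And>i. i < n \<Longrightarrow> (\<lambda>z. E z t i) \<in> borel_measurable P"
    and h: "\<And>i. i < n \<Longrightarrow> (\<lambda>z. H z t i) \<in> borel_measurable P" by auto
  have g: "(\<lambda>z. Gt z t i) \<in> borel_measurable P" if "i < n" for i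
    unfolding ec_g_def by (rule measurable_G[OF that measurable_seed(2) x])
  have d: "(\<lambda>z. Dl z t i) \<in> borel_measurable P" if "i < n" for i
    unfolding ec_delta_def
    by (rule measurable_C[OF measurable_seed(3)]) (use e[OF that] g[OF that] h[OF that] in measurable)
  have "(\<lambda>z. \<Sum>i<n. Dl z t i) \<in> borel_measurable P"
    using d by (intro borel_measurable_sum) auto
  then show ?case
    unfolding ec_x_Suc ec_hb_Suc ec_e_Suc ec_h_Suc using x hb e g h d
    by (auto intro!: borel_measurable_add borel_measurable_diff borel_measurable_scaleR)
qed

lemma measurable_X: "(\<lambda>z. X z t) \<in> borel_measurable P"
  and measurable_E: "i < n \<Longrightarrow> (\<lambda>z. E z t i) \<in> borel_measurable P"
  and measurable_H: "i < n \<Longrightarrow> (\<lambda>z. H z t i) \<in> borel_measurable P"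
  using measurable_state by blast+

lemma measurable_Gt: "i < n \<Longrightarrow> (\<lambda>z. Gt z t i) \<in> borel_measurable P"
  unfolding ec_g_def by (rule measurable_G[OF _ measurable_seed(2) measurable_X])

lemma measurable_Dl: "i < n \<Longrightarrow> (\<lambda>z. Dl z t i) \<in> borel_measurable P"
  unfolding ec_delta_def
  by (rule measurable_C[OF measurable_seed(3)]) (use measurable_E measurable_Gt measurable_H in measurable)

lemma measurable_V: "i < n \<Longrightarrow> (\<lambda>z. V z t i) \<in> borel_measurable P"
  using measurable_E[of i] measurable_Gt[of i] measurable_H[of i] by simp

lemma measurable_Xi: "i < n \<Longrightarrow> (\<lambda>z. Xi z t i) \<in> borel_measurable P"
  using measurable_Gt[of i] measurable_gradf[OF _ measurable_X, of i] by simp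

lemma measurable_W: "i < n \<Longrightarrow> (\<lambda>z. W z t i) \<in> borel_measurable P"
  using measurable_E[of i] measurable_H[of i] measurable_gradf[OF _ measurable_X, of i] by simp

lemma measurable_GF: "(\<lambda>z. GF z t) \<in> borel_measurable P"
  using measurable_gradf[OF _ measurable_X] by (intro borel_measurable_scaleR borel_measurable_sum) auto

lemma nn_integral_Xi_le:
  assumes i: "i < n"
  shows "(\<integral>\<^sup>+z. ennreal ((norm (Xi z t i))\<^sup>2) \<partial>P) \<le> ennreal (\<sigma>\<^sup>2)"
proof -
  have "(\<integral>\<^sup>+z. ennreal ((norm (Xi z t i))\<^sup>2) \<partial>P) \<le> (\<integral>\<^sup>+z. ennreal (\<sigma>\<^sup>2) \<partial>P)"
  proof (rule nn_integral_PiM_le_by_coordinate[where k="Grad t i", OF seed_prob])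
    show "(\<lambda>z. ennreal ((norm (Xi z t i))\<^sup>2)) \<in> borel_measurable P"
      using measurable_Xi[OF i] by measurable
    fix z
    have "(\<integral>\<^sup>+x. ennreal ((norm (Xi (z(Grad t i := x)) t i))\<^sup>2) \<partial>seed_distr \<mu> \<nu> (Grad t i))
       = (\<integral>\<^sup>+x. ennreal ((norm (G i x (X z t) - gradf i (X z t)))\<^sup>2) \<partial>\<nu> i)"
      by (simp add: ec_g_def ec_upd_later_seed seed_distr_def)
    also have "\<dots> \<le> ennreal (\<sigma>\<^sup>2)" by (rule G_var[OF i])
    finally show "(\<integral>\<^sup>+x. ennreal ((norm (Xi (z(Grad t i := x)) t i))\<^sup>2) \<partial>seed_distr \<mu> \<nu> (Grad t i))
       \<le> ennreal (\<sigma>\<^sup>2)" .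
  qed simp_all
  then show ?thesis
    using prob_space.emeasure_space_1[OF prob_space_P] by simp
qed

lemma nn_integral_R_le:
  assumes i: "i < n"
  shows "(\<integral>\<^sup>+z. ennreal ((norm (R z t i))\<^sup>2) \<partial>P)
    \<le> ennreal (1 - \<delta>) * (\<integral>\<^sup>+z. ennreal ((norm (V z t i))\<^sup>2) \<partial>P)"
proof -
  note V = measurable_V[OF i]
  have "(\<integral>\<^sup>+z. ennreal ((norm (R z t i))\<^sup>2) \<partial>P) \<le> (\<integral>\<^sup>+z. ennreal ((1 - \<delta>) * (norm (V z t i))\<^sup>2) \<partial>P)"
  proof (rule nn_integral_PiM_le_by_coordinate[where k="Comp t i", OF seed_prob])
    show "(\<lambda>z. ennreal ((norm (R z t i))\<^sup>2)) \<in> borel_measurable P"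
      using V measurable_Dl[OF i] by measurable
    show "(\<lambda>z. ennreal ((1 - \<delta>) * (norm (V z t i))\<^sup>2)) \<in> borel_measurable P"
      using V by measurable
    fix z
    have "(\<integral>\<^sup>+x. ennreal ((norm (R (z(Comp t i := x)) t i))\<^sup>2) \<partial>seed_distr \<mu> \<nu> (Comp t i))
       = (\<integral>\<^sup>+x. ennreal ((norm (C x (V z t i) - V z t i))\<^sup>2) \<partial>\<mu>)"
      by (simp add: ec_g_def ec_delta_def ec_upd_later_seed seed_distr_def norm_minus_commute)
    also have "\<dots> \<le> ennreal ((1 - \<delta>) * (norm (V z t i))\<^sup>2)" by (rule C_contr)
    finally show "(\<integral>\<^sup>+x. ennreal ((norm (R (z(Comp t i := x)) t i))\<^sup>2) \<partial>seed_distr \<mu> \<nu> (Comp t i))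
       \<le> ennreal ((1 - \<delta>) * (norm (V z t i))\<^sup>2)" .
  qed (simp add: ec_g_def ec_upd_later_seed)
  also have "\<dots> = ennreal (1 - \<delta>) * (\<integral>\<^sup>+z. ennreal ((norm (V z t i))\<^sup>2) \<partial>P)"
    using V by (simp add: ennreal_mult'' nn_integral_cmult)
  finally show ?thesis .
qed

lemma nn_integral_V_Suc_le:
  assumes i: "i < n"
  shows "(\<integral>\<^sup>+z. ennreal ((norm (V z (Suc t) i))\<^sup>2) \<partial>P)
    \<le> (\<integral>\<^sup>+z. ennreal ((norm (W z (Suc t) i))\<^sup>2 + \<sigma>\<^sup>2) \<partial>P)"
proof (rule nn_integral_PiM_le_by_coordinate[where k="Grad (Suc t) i", OF seed_prob])
  show "(\<lambda>z. ennreal ((norm (V z (Suc t) i))\<^sup>2)) \<in> borel_measurable P"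
    using measurable_V[OF i] by measurable
  show "(\<lambda>z. ennreal ((norm (W z (Suc t) i))\<^sup>2 + \<sigma>\<^sup>2)) \<in> borel_measurable P"
    using measurable_W[OF i] by measurable
next
  fix z
  let ?x = "X z (Suc t)"
  interpret \<nu>: prob_space "\<nu> i" by (rule prob_space_nu[OF i])
  have "(\<integral>\<^sup>+x. ennreal ((norm (V (z(Grad (Suc t) i := x)) (Suc t) i))\<^sup>2)
      \<partial>seed_distr \<mu> \<nu> (Grad (Suc t) i))
     = (\<integral>\<^sup>+x. ennreal ((norm (W z (Suc t) i + (G i x ?x - gradf i ?x)))\<^sup>2) \<partial>\<nu> i)"
    by (simp add: ec_g_def ec_upd_later_seed seed_distr_def algebra_simps)
  also have "\<dots> \<le> ennreal ((norm (W z (Suc t) i))\<^sup>2 + \<sigma>\<^sup>2)"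
    using G_int[OF i] G_unbiased[OF i] G_var[OF i]
    by (intro nn_integral_norm_add_centered_le \<nu>.prob_space_axioms) (simp_all add: \<nu>.prob_space)
  finally show "(\<integral>\<^sup>+x. ennreal ((norm (V (z(Grad (Suc t) i := x)) (Suc t) i))\<^sup>2)
      \<partial>seed_distr \<mu> \<nu> (Grad (Suc t) i))
     \<le> ennreal ((norm (W z (Suc t) i))\<^sup>2 + \<sigma>\<^sup>2)" .
qed (simp add: ec_upd_later_seed)

abbreviation "mean_input_sq t \<equiv> ennreal (1 / real n) * (\<Sum>i<n. \<integral>\<^sup>+z. ennreal ((norm (V z t i))\<^sup>2) \<partial>P)"
abbreviation "mean_error_sq t \<equiv> ennreal (1 / real n) * (\<Sum>i<n. \<integral>\<^sup>+z. ennreal ((norm (E z t i))\<^sup>2) \<partial>P)"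
abbreviation "grad_sq t \<equiv> \<integral>\<^sup>+z. ennreal ((norm (GF z t))\<^sup>2) \<partial>P"
abbreviation "mean_residual_sq t \<equiv> \<integral>\<^sup>+z. ennreal (1 / real n * (\<Sum>i<n. (norm (R z t i))\<^sup>2)) \<partial>P"
abbreviation "mean_noise_sq t \<equiv> \<integral>\<^sup>+z. ennreal (1 / real n * (\<Sum>i<n. (norm (Xi z t i))\<^sup>2)) \<partial>P"

lemma mean_input_sq_Suc_le:
  "mean_input_sq (Suc t) \<le> (\<integral>\<^sup>+z. ennreal (1 / real n * (\<Sum>i<n. (norm (W z (Suc t) i))\<^sup>2)) \<partial>P) + ennreal (\<sigma>\<^sup>2)"
proof -
  have W: "(\<lambda>z. (norm (W z (Suc t) i))\<^sup>2) \<in> borel_measurable P" if "i < n" for i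
    using measurable_W[OF that] by measurable
  have "mean_input_sq (Suc t)
      \<le> ennreal (1 / real n) * (\<Sum>i<n. \<integral>\<^sup>+z. ennreal ((norm (W z (Suc t) i))\<^sup>2 + \<sigma>\<^sup>2) \<partial>P)"
    by (intro mult_left_mono sum_mono nn_integral_V_Suc_le) simp_all
  also have "\<dots> = (\<integral>\<^sup>+z. ennreal (1 / real n * (\<Sum>i<n. (norm (W z (Suc t) i))\<^sup>2 + \<sigma>\<^sup>2)) \<partial>P)"
    using W by (intro nn_integral_ennreal_mean[symmetric]) auto
  also have "\<dots> \<le> (\<integral>\<^sup>+z. ennreal (1 / real n * (\<Sum>i<n. (norm (W z (Suc t) i))\<^sup>2) + \<sigma>\<^sup>2) \<partial>P)"
  proof (intro nn_integral_mono ennreal_leI)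
    show "1 / real n * (\<Sum>i<n. a i + \<sigma>\<^sup>2) \<le> 1 / real n * (\<Sum>i<n. a i) + \<sigma>\<^sup>2" for a
      by (cases "n = 0") (simp_all add: sum.distrib field_simps)
  qed
  also have "\<dots> = (\<integral>\<^sup>+z. ennreal (1 / real n * (\<Sum>i<n. (norm (W z (Suc t) i))\<^sup>2)) + ennreal (\<sigma>\<^sup>2) \<partial>P)"
    by (intro nn_integral_cong ennreal_plus) (simp_all add: sum_nonneg)
  also have "\<dots> = (\<integral>\<^sup>+z. ennreal (1 / real n * (\<Sum>i<n. (norm (W z (Suc t) i))\<^sup>2)) \<partial>P) + ennreal (\<sigma>\<^sup>2)"
    using W prob_space.emeasure_space_1[OF prob_space_P]
    by (subst nn_integral_add) (auto intro!: borel_measurable_sum)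
  finally show ?thesis .
qed

lemma mean_residual_sq_le: "mean_residual_sq t \<le> ennreal (1 - \<delta>) * mean_input_sq t"
proof -
  have "(\<integral>\<^sup>+z. ennreal (1 / real n * (\<Sum>i<n. (norm (R z t i))\<^sup>2)) \<partial>P)
      = ennreal (1 / real n) * (\<Sum>i<n. \<integral>\<^sup>+z. ennreal ((norm (R z t i))\<^sup>2) \<partial>P)"
    using measurable_E measurable_Gt measurable_H measurable_Dl
    by (intro nn_integral_ennreal_mean zero_le_power2) measurable
  also have "\<dots> \<le> ennreal (1 / real n) * (\<Sum>i<n. ennreal (1 - \<delta>) * \<integral>\<^sup>+z. ennreal ((norm (V z t i))\<^sup>2) \<partial>P)"
    by (intro mult_left_mono sum_mono nn_integral_R_le) simp_all
  finally show ?thesis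
    by (simp add: sum_distrib_left ac_simps)
qed

lemma mean_noise_sq_le: "mean_noise_sq t \<le> ennreal (\<sigma>\<^sup>2)"
proof -
  have "(\<integral>\<^sup>+z. ennreal (1 / real n * (\<Sum>i<n. (norm (Xi z t i))\<^sup>2)) \<partial>P)
      = ennreal (1 / real n) * (\<Sum>i<n. \<integral>\<^sup>+z. ennreal ((norm (Xi z t i))\<^sup>2) \<partial>P)"
    using measurable_Gt measurable_gradf[OF _ measurable_X]
    by (intro nn_integral_ennreal_mean zero_le_power2) measurable
  also have "\<dots> \<le> ennreal (1 / real n) * (\<Sum>i<n. ennreal (\<sigma>\<^sup>2))"
    by (intro mult_left_mono sum_mono nn_integral_Xi_le) simp_all
  also have "\<dots> = ennreal (real n / real n * \<sigma>\<^sup>2)"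
    by (simp add: ennreal_of_nat_eq_real_of_nat ennreal_mult[symmetric])
  also have "\<dots> \<le> ennreal (\<sigma>\<^sup>2)"
    by (intro ennreal_leI) (cases "n = 0"; simp)
  finally show ?thesis .
qed

lemma mean_error_sq_eq:
  "mean_error_sq t = (\<integral>\<^sup>+z. ennreal (1 / real n * (\<Sum>i<n. (norm (E z t i))\<^sup>2)) \<partial>P)"
  using measurable_E by (intro nn_integral_ennreal_mean[symmetric] zero_le_power2) measurable

lemma nn_integral_mean_W_Suc_le:
  assumes "0 < \<delta>" "\<delta> \<le> 1"
    and "\<And>i x y. i < n \<Longrightarrow> norm (gradf i x - gradf i y) \<le> Li i * norm (x - y)"
  defines "L2 \<equiv> 1 / real n * (\<Sum>i<n. (Li i)\<^sup>2)"
  shows "(\<integral>\<^sup>+z. ennreal (1 / real n * (\<Sum>i<n. (norm (W z (Suc t) i))\<^sup>2)) \<partial>P)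
    \<le> ennreal ((1 + \<delta> / 4) * (1 + \<eta>)\<^sup>2 + 80 * \<gamma>\<^sup>2 * L2 / \<delta>) * mean_residual_sq t
      + ennreal (8 * \<eta> ^ 4 / \<delta> + 80 * \<gamma>\<^sup>2 * L2 * \<eta>\<^sup>2 / \<delta>) * mean_error_sq t
      + ennreal (40 / \<delta> + 80 * \<gamma>\<^sup>2 * L2 / \<delta>) * mean_noise_sq t
      + ennreal (80 * \<gamma>\<^sup>2 * L2 / \<delta>) * grad_sq t"
proof -
  define c1 where "c1 = (1 + \<delta> / 4) * (1 + \<eta>)\<^sup>2 + 80 * \<gamma>\<^sup>2 * L2 / \<delta>"
  define c2 where "c2 = 8 * \<eta> ^ 4 / \<delta> + 80 * \<gamma>\<^sup>2 * L2 * \<eta>\<^sup>2 / \<delta>"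
  define c3 where "c3 = 40 / \<delta> + 80 * \<gamma>\<^sup>2 * L2 / \<delta>"
  define c4 where "c4 = 80 * \<gamma>\<^sup>2 * L2 / \<delta>"
  have c: "0 \<le> c1" "0 \<le> c2" "0 \<le> c3" "0 \<le> c4"
    using assms(1) by (simp_all add: c1_def c2_def c3_def c4_def L2_def sum_nonneg)
  let ?mR = "\<lambda>z. 1 / real n * (\<Sum>i<n. (norm (R z t i))\<^sup>2)"
    and ?mE = "\<lambda>z. 1 / real n * (\<Sum>i<n. (norm (E z t i))\<^sup>2)"
    and ?mX = "\<lambda>z. 1 / real n * (\<Sum>i<n. (norm (Xi z t i))\<^sup>2)"
    and ?g = "\<lambda>z. (norm (GF z t))\<^sup>2"
  have m: "?mR \<in> borel_measurable P" "?mE \<in> borel_measurable P" "?mX \<in> borel_measurable P"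
    "?g \<in> borel_measurable P"
    using measurable_E measurable_V measurable_Dl measurable_Xi measurable_GF
    by (measurable; auto intro!: borel_measurable_sum)+
  have "(\<integral>\<^sup>+z. ennreal (1 / real n * (\<Sum>i<n. (norm (W z (Suc t) i))\<^sup>2)) \<partial>P)
      \<le> (\<integral>\<^sup>+z. ennreal c1 * ennreal (?mR z) + ennreal c2 * ennreal (?mE z)
            + ennreal c3 * ennreal (?mX z) + ennreal c4 * ennreal (?g z) \<partial>P)"
  proof (intro nn_integral_mono)
    fix z
    have "1 / real n * (\<Sum>i<n. (norm (W z (Suc t) i))\<^sup>2) \<le> c1 * ?mR z + c2 * ?mE z + c3 * ?mX z + c4 * ?g z"
      unfolding c1_def c2_def c3_def c4_def L2_def by (rule mean_W_Suc_power2_le[OF assms(1-3)])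
    then show "ennreal (1 / real n * (\<Sum>i<n. (norm (W z (Suc t) i))\<^sup>2))
        \<le> ennreal c1 * ennreal (?mR z) + ennreal c2 * ennreal (?mE z) + ennreal c3 * ennreal (?mX z)
          + ennreal c4 * ennreal (?g z)"
      using c
      by (simp add: ennreal_mult[symmetric] ennreal_plus[symmetric] sum_nonneg ennreal_leI del: ennreal_plus)
  qed
  also have "\<dots> = ennreal c1 * mean_residual_sq t + ennreal c2 * mean_error_sq t + ennreal c3 * mean_noise_sq t
      + ennreal c4 * grad_sq t"
    unfolding mean_error_sq_eq using m by (simp add: nn_integral_add nn_integral_cmult)
  finally show ?thesis
    unfolding c1_def c2_def c3_def c4_def .
qed

lemma expected_recursion:
  assumes "0 < \<delta>" "\<delta> \<le> 1"
    and "\<And>i x y. i < n \<Longrightarrow> norm (gradf i x - gradf i y) \<le> Li i * norm (x - y)"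
  defines "L2 \<equiv> 1 / real n * (\<Sum>i<n. (Li i)\<^sup>2)"
  shows "mean_input_sq (Suc t)
    \<le> ennreal (((1 + \<delta> / 4) * (1 + \<eta>)\<^sup>2 + 80 * \<gamma>\<^sup>2 * L2 / \<delta>) * (1 - \<delta>)) * mean_input_sq t
      + ennreal (8 * \<eta> ^ 4 / \<delta> + 80 * \<gamma>\<^sup>2 * L2 * \<eta>\<^sup>2 / \<delta>) * mean_error_sq t
      + ennreal (80 * \<gamma>\<^sup>2 * L2 / \<delta>) * grad_sq t
      + ennreal ((1 + 40 / \<delta> + 80 * \<gamma>\<^sup>2 * L2 / \<delta>) * \<sigma>\<^sup>2)"
proof -
  define c1 where "c1 = (1 + \<delta> / 4) * (1 + \<eta>)\<^sup>2 + 80 * \<gamma>\<^sup>2 * L2 / \<delta>"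
  define c3 where "c3 = 40 / \<delta> + 80 * \<gamma>\<^sup>2 * L2 / \<delta>"
  have c: "0 \<le> c1" "0 \<le> c3"
    using assms(1) by (simp_all add: c1_def c3_def L2_def sum_nonneg)
  have "mean_input_sq (Suc t)
      \<le> ennreal c1 * mean_residual_sq t + ennreal (8 * \<eta> ^ 4 / \<delta> + 80 * \<gamma>\<^sup>2 * L2 * \<eta>\<^sup>2 / \<delta>) * mean_error_sq t
        + ennreal c3 * mean_noise_sq t + ennreal (80 * \<gamma>\<^sup>2 * L2 / \<delta>) * grad_sq t + ennreal (\<sigma>\<^sup>2)"
    using order_trans[OF mean_input_sq_Suc_le add_right_mono[OF nn_integral_mean_W_Suc_le[OF assms(1-3)]]]
    unfolding c1_def c3_def L2_def .
  also have "\<dots> \<le> ennreal c1 * (ennreal (1 - \<delta>) * mean_input_sq t)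
        + ennreal (8 * \<eta> ^ 4 / \<delta> + 80 * \<gamma>\<^sup>2 * L2 * \<eta>\<^sup>2 / \<delta>) * mean_error_sq t
        + ennreal c3 * ennreal (\<sigma>\<^sup>2) + ennreal (80 * \<gamma>\<^sup>2 * L2 / \<delta>) * grad_sq t + ennreal (\<sigma>\<^sup>2)"
    by (intro add_mono mult_left_mono mean_residual_sq_le mean_noise_sq_le order_refl) simp_all
  also have "\<dots> = ennreal (c1 * (1 - \<delta>)) * mean_input_sq t
        + ennreal (8 * \<eta> ^ 4 / \<delta> + 80 * \<gamma>\<^sup>2 * L2 * \<eta>\<^sup>2 / \<delta>) * mean_error_sq t
        + ennreal (80 * \<gamma>\<^sup>2 * L2 / \<delta>) * grad_sq t + ennreal ((1 + c3) * \<sigma>\<^sup>2)"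
    using c by (simp add: ennreal_mult' ennreal_mult'' distrib_right ac_simps)
  finally show ?thesis
    unfolding c1_def c3_def by (simp add: add.assoc)
qed

lemma moments_of_law:
  assumes Y: "Y \<in> measurable M P" "distr M P Y = P"
  shows "ennreal (1 / real n) * (\<Sum>i<n. \<integral>\<^sup>+\<omega>. ennreal ((norm (V (Y \<omega>) t i))\<^sup>2) \<partial>M) = mean_input_sq t"
    and "ennreal (1 / real n) * (\<Sum>i<n. \<integral>\<^sup>+\<omega>. ennreal ((norm (E (Y \<omega>) t i))\<^sup>2) \<partial>M) = mean_error_sq t"
    and "(\<integral>\<^sup>+\<omega>. ennreal ((norm (GF (Y \<omega>) t))\<^sup>2) \<partial>M) = grad_sq t"
proof -
  have law: "(\<integral>\<^sup>+\<omega>. F (Y \<omega>) \<partial>M) = (\<integral>\<^sup>+z. F z \<partial>P)" if "F \<in> borel_measurable P" for F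
    using nn_integral_distr[OF Y(1), of F] that by (simp add: Y(2))
  show "ennreal (1 / real n) * (\<Sum>i<n. \<integral>\<^sup>+\<omega>. ennreal ((norm (V (Y \<omega>) t i))\<^sup>2) \<partial>M) = mean_input_sq t"
    using measurable_E measurable_Gt measurable_H
    by (intro arg_cong2[where f=times] refl sum.cong law, unfold lessThan_iff) measurable
  show "ennreal (1 / real n) * (\<Sum>i<n. \<integral>\<^sup>+\<omega>. ennreal ((norm (E (Y \<omega>) t i))\<^sup>2) \<partial>M) = mean_error_sq t"
    using measurable_E
    by (intro arg_cong2[where f=times] refl sum.cong law, unfold lessThan_iff) measurable
  show "(\<integral>\<^sup>+\<omega>. ennreal ((norm (GF (Y \<omega>) t))\<^sup>2) \<partial>M) = grad_sq t"
    using measurable_gradf[OF _ measurable_X] by (intro law) (measurable; auto intro!: borel_measurable_sum)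
qed

end

section \<open>The step size conditions\<close>

lemma contraction_factor_le:
  fixes \<delta> \<eta> g :: real
  assumes \<delta>: "0 < \<delta>" "\<delta> \<le> 1" and \<eta>: "0 \<le> \<eta>" "\<eta> \<le> \<delta> / 4" and g: "0 \<le> g" "2048 * g \<le> \<delta>\<^sup>2"
  shows "((1 + \<delta> / 4) * (1 + \<eta>)\<^sup>2 + 80 * g / \<delta>) * (1 - \<delta>) \<le> 1 - \<delta> / 32"
proof -
  have "(1 + \<eta>)\<^sup>2 \<le> (1 + \<delta> / 4)\<^sup>2"
    using \<eta> by (intro power_mono) auto
  then have "(1 + \<delta> / 4) * (1 + \<eta>)\<^sup>2 \<le> (1 + \<delta> / 4) ^ 3"
    using \<delta> by (simp add: power3_eq_cube power2_eq_square mult_left_mono)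
  moreover have "80 * g / \<delta> \<le> 80 * \<delta> / 2048"
    using \<delta> g by (simp add: field_simps power2_eq_square)
  ultimately have "((1 + \<delta> / 4) * (1 + \<eta>)\<^sup>2 + 80 * g / \<delta>) * (1 - \<delta>)
      \<le> ((1 + \<delta> / 4) ^ 3 + 80 * \<delta> / 2048) * (1 - \<delta>)"
    using \<delta> by (intro mult_right_mono) auto
  also have "\<dots> = 1 - \<delta> / 32 - (7 * \<delta> / 32 - 5 * \<delta> / 128 * (1 - \<delta>))
      - (9 * \<delta>\<^sup>2 / 16 + 11 * \<delta> ^ 3 / 64 + \<delta> ^ 4 / 64)"
    by (simp add: field_simps power2_eq_square power3_eq_cube eval_nat_numeral)
  also have "\<dots> \<le> 1 - \<delta> / 32"
  proof -
    have "5 * \<delta> / 128 * (1 - \<delta>) \<le> 7 * \<delta> / 32"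
      using \<delta> by (simp add: field_simps)
    moreover have "0 \<le> 9 * \<delta>\<^sup>2 / 16 + 11 * \<delta> ^ 3 / 64 + \<delta> ^ 4 / 64"
      using \<delta> by simp
    ultimately show ?thesis by linarith
  qed
  finally show ?thesis .
qed

lemma econtrol_coefficients:
  fixes \<delta> k \<eta> \<gamma> L2 \<sigma> :: real and n :: nat
  assumes \<delta>: "0 < \<delta>" "\<delta> \<le> 1" and k: "1 \<le> k" and \<eta>: "\<eta> = \<delta> / (4 * k)" and L2: "0 \<le> L2"
    and \<gamma>: "0 \<le> \<gamma>" "\<gamma> * (32 * sqrt 2 * sqrt L2) \<le> \<delta>"
  shows "((1 + \<delta> / 4) * (1 + \<eta>)\<^sup>2 + 80 * \<gamma>\<^sup>2 * L2 / \<delta>) * (1 - \<delta>) \<le> 1 - \<delta> / 32"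
    and "8 * \<eta> ^ 4 / \<delta> + 80 * \<gamma>\<^sup>2 * L2 * \<eta>\<^sup>2 / \<delta>
      \<le> 8 * \<delta> ^ 3 / (k ^ 4 * 4 ^ 4) + 128 * L2 * \<gamma>\<^sup>2 * \<delta> / (k\<^sup>2 * 4\<^sup>2)"
    and "80 * \<gamma>\<^sup>2 * L2 / \<delta> \<le> 128 * L2 * \<gamma>\<^sup>2 / \<delta>"
    and "(1 + 40 / \<delta> + 80 * \<gamma>\<^sup>2 * L2 / \<delta>) * \<sigma>\<^sup>2 \<le> 64 / \<delta> * (1 + L2 * \<gamma>\<^sup>2 / real n) * \<sigma>\<^sup>2"
proof -
  have "(\<gamma> * (32 * sqrt 2 * sqrt L2))\<^sup>2 \<le> \<delta>\<^sup>2"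
    using \<gamma> L2 by (intro power_mono) auto
  then have \<gamma>L: "2048 * (\<gamma>\<^sup>2 * L2) \<le> \<delta>\<^sup>2"
    using L2 by (simp add: power_mult_distrib)
  have \<eta>_le: "0 \<le> \<eta>" "\<eta> \<le> \<delta> / 4"
    unfolding \<eta> using \<delta> k by (simp, intro divide_left_mono) auto
  show "((1 + \<delta> / 4) * (1 + \<eta>)\<^sup>2 + 80 * \<gamma>\<^sup>2 * L2 / \<delta>) * (1 - \<delta>) \<le> 1 - \<delta> / 32"
    using contraction_factor_le[OF \<delta> \<eta>_le _ \<gamma>L] L2 by (simp add: mult.assoc)
  define q where "q = L2 * \<gamma>\<^sup>2 * \<delta> / (k\<^sup>2 * 4\<^sup>2)"
  have q: "0 \<le> q"
    using \<delta> L2 by (simp add: q_def)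
  have q_eq: "8 * \<eta> ^ 4 / \<delta> = 8 * \<delta> ^ 3 / (k ^ 4 * 4 ^ 4)" "80 * \<gamma>\<^sup>2 * L2 * \<eta>\<^sup>2 / \<delta> = 80 * q"
    "128 * L2 * \<gamma>\<^sup>2 * \<delta> / (k\<^sup>2 * 4\<^sup>2) = 128 * q"
    using \<delta> k unfolding \<eta> q_def by (simp_all add: field_simps power_divide eval_nat_numeral)
  show "8 * \<eta> ^ 4 / \<delta> + 80 * \<gamma>\<^sup>2 * L2 * \<eta>\<^sup>2 / \<delta>
      \<le> 8 * \<delta> ^ 3 / (k ^ 4 * 4 ^ 4) + 128 * L2 * \<gamma>\<^sup>2 * \<delta> / (k\<^sup>2 * 4\<^sup>2)"
    unfolding q_eq using q by simp
  show "80 * \<gamma>\<^sup>2 * L2 / \<delta> \<le> 128 * L2 * \<gamma>\<^sup>2 / \<delta>"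
    using \<delta> L2 by (simp add: divide_right_mono)
  have "80 * (\<gamma>\<^sup>2 * L2) \<le> 1"
    using \<gamma>L \<delta> power_le_one[of \<delta> 2] by simp
  with \<delta> have "\<delta> + 40 + 80 * (\<gamma>\<^sup>2 * L2) \<le> 64"
    by linarith
  then have "(\<delta> + 40 + 80 * (\<gamma>\<^sup>2 * L2)) / \<delta> \<le> 64 / \<delta>"
    using \<delta> by (intro divide_right_mono) auto
  then have "1 + 40 / \<delta> + 80 * \<gamma>\<^sup>2 * L2 / \<delta> \<le> 64 / \<delta>"
    using \<delta> by (simp add: add_divide_distrib)
  also have "\<dots> \<le> 64 / \<delta> * (1 + L2 * \<gamma>\<^sup>2 / real n)"
    using \<delta> L2 mult_left_mono[of 1 "1 + L2 * \<gamma>\<^sup>2 / real n" "64 / \<delta>"] by simp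
  finally show "(1 + 40 / \<delta> + 80 * \<gamma>\<^sup>2 * L2 / \<delta>) * \<sigma>\<^sup>2 \<le> 64 / \<delta> * (1 + L2 * \<gamma>\<^sup>2 / real n) * \<sigma>\<^sup>2"
    by (rule mult_right_mono) simp
qed

theorem lemma11:
  fixes M :: "'a measure"
    and Z :: "seed_idx \<Rightarrow> 'a \<Rightarrow> 'r"
    and \<mu> :: "'r measure" and \<nu> :: "nat \<Rightarrow> 'r measure"
    and C :: "'r \<Rightarrow> 'v \<Rightarrow> 'v::euclidean_space"
    and G :: "nat \<Rightarrow> 'r \<Rightarrow> 'v \<Rightarrow> 'v"
    and f :: "nat \<Rightarrow> 'v \<Rightarrow> real" and gradf :: "nat \<Rightarrow> 'v \<Rightarrow> 'v"
    and n :: nat and L \<delta> \<sigma> \<gamma> \<eta> k :: real and Li :: "nat \<Rightarrow> real" and x0 :: 'v and t :: nat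
  assumes n: "n \<ge> 1"
    and M: "prob_space M"
    and \<mu>: "prob_space \<mu>" and \<nu>: "\<And>i. i < n \<Longrightarrow> prob_space (\<nu> i)"
    and indep: "prob_space.indep_vars M (seed_distr \<mu> \<nu>) Z UNIV"
    and distr: "\<And>j. distr M (seed_distr \<mu> \<nu> j) (Z j) = seed_distr \<mu> \<nu> j"
    and \<delta>: "0 < \<delta>" "\<delta> \<le> 1"
    and C_meas: "(\<lambda>(s, v). C s v) \<in> borel_measurable (\<mu> \<Otimes>\<^sub>M borel)"
    and C_contr: "\<And>v. (\<integral>\<^sup>+ s. ennreal ((norm (C s v - v))\<^sup>2) \<partial>\<mu>) \<le> ennreal ((1 - \<delta>) * (norm v)\<^sup>2)"
    and G_meas: "\<And>i. i < n \<Longrightarrow> (\<lambda>(w, x). G i w x) \<in> borel_measurable (\<nu> i \<Otimes>\<^sub>M borel)"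
    and grad: "\<And>i x. i < n \<Longrightarrow> (f i has_derivative (\<lambda>h. gradf i x \<bullet> h)) (at x)"
    and G_int: "\<And>i x. i < n \<Longrightarrow> integrable (\<nu> i) (\<lambda>w. G i w x)"
    and G_unbiased: "\<And>i x. i < n \<Longrightarrow> (\<integral>w. G i w x \<partial>\<nu> i) = gradf i x"
    and \<sigma>: "\<sigma> \<ge> 0"
    and G_var: "\<And>i x. i < n \<Longrightarrow>
           (\<integral>\<^sup>+ w. ennreal ((norm (G i w x - gradf i x))\<^sup>2) \<partial>\<nu> i) \<le> ennreal (\<sigma>\<^sup>2)"
    and L_smooth: "\<And>x y. norm ((1 / real n) *\<^sub>R (\<Sum>i<n. gradf i x) - (1 / real n) *\<^sub>R (\<Sum>i<n. gradf i y))
                          \<le> L * norm (x - y)"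
    and Li_smooth: "\<And>i x y. i < n \<Longrightarrow> norm (gradf i x - gradf i y) \<le> Li i * norm (x - y)"
    and k: "k \<ge> 1"
    and \<eta>: "\<eta> = \<delta> / (4 * k)"
    and \<gamma>: "\<gamma> > 0" "\<gamma> * (32 * sqrt 2 * sqrt ((1 / real n) * (\<Sum>i<n. (Li i)\<^sup>2))) \<le> \<delta>"
  shows
    "(let Lt = sqrt ((1 / real n) * (\<Sum>i<n. (Li i)\<^sup>2));
          zz = (\<lambda>\<omega> j. Z j \<omega>);
          E = (\<lambda>t. ennreal (1 / real n) *
                 (\<Sum>i<n. \<integral>\<^sup>+ \<omega>. ennreal ((norm (ec_e n \<gamma> \<eta> C G x0 (zz \<omega>) t i))\<^sup>2) \<partial>M));
          H = (\<lambda>t. ennreal (1 / real n) *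
                 (\<Sum>i<n. \<integral>\<^sup>+ \<omega>. ennreal ((norm (\<eta> *\<^sub>R ec_e n \<gamma> \<eta> C G x0 (zz \<omega>) t i
                                   + ec_g n \<gamma> \<eta> C G x0 (zz \<omega>) t i - ec_h n \<gamma> \<eta> C G x0 (zz \<omega>) t i))\<^sup>2) \<partial>M));
          GF = (\<lambda>t. \<integral>\<^sup>+ \<omega>. ennreal ((norm ((1 / real n) *\<^sub>R
                        (\<Sum>i<n. gradf i (ec_x n \<gamma> \<eta> C G x0 (zz \<omega>) t))))\<^sup>2) \<partial>M)
      in H (Suc t) \<le> ennreal (1 - \<delta> / 32) * H t
           + ennreal (8 * \<delta> ^ 3 / (k ^ 4 * 4 ^ 4) + 128 * Lt\<^sup>2 * \<gamma>\<^sup>2 * \<delta> / (k\<^sup>2 * 4\<^sup>2)) * E t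
           + ennreal (128 * Lt\<^sup>2 * \<gamma>\<^sup>2 / \<delta>) * GF t
           + ennreal (64 / \<delta> * (1 + Lt\<^sup>2 * \<gamma>\<^sup>2 / real n) * \<sigma>\<^sup>2))"
proof -
  define L2 where "L2 = 1 / real n * (\<Sum>i<n. (Li i)\<^sup>2)"
  have L2: "0 \<le> L2" and Lt: "(sqrt (1 / real n * (\<Sum>i<n. (Li i)\<^sup>2)))\<^sup>2 = L2"
    by (simp_all add: L2_def sum_nonneg)
  \<comment> \<open>\<open>\<nu> i\<close> is a probability measure only for \<open>i < n\<close>; the law of every seed comes from \<open>distr\<close>\<close>
  note law = indep_vars_law_PiM[OF M indep distr]
  have gradf_meas: "gradf i \<in> borel_measurable borel" if "i < n" for i
    using Li_smooth[OF that] by (intro lipschitz_bound_borel_measurable) (simp add: dist_norm)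
  interpret econtrol n \<gamma> \<eta> C G x0 gradf \<mu> \<nu> \<delta> \<sigma>
    by (rule econtrol.intro) (fact law(3) C_meas G_meas C_contr G_int G_unbiased G_var gradf_meas)+
  note coeff = econtrol_coefficients[OF \<delta> k \<eta> L2 less_imp_le[OF \<gamma>(1)] \<gamma>(2)[folded L2_def]]
  have "mean_input_sq (Suc t)
    \<le> ennreal (((1 + \<delta> / 4) * (1 + \<eta>)\<^sup>2 + 80 * \<gamma>\<^sup>2 * L2 / \<delta>) * (1 - \<delta>)) * mean_input_sq t
      + ennreal (8 * \<eta> ^ 4 / \<delta> + 80 * \<gamma>\<^sup>2 * L2 * \<eta>\<^sup>2 / \<delta>) * mean_error_sq t
      + ennreal (80 * \<gamma>\<^sup>2 * L2 / \<delta>) * grad_sq t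
      + ennreal ((1 + 40 / \<delta> + 80 * \<gamma>\<^sup>2 * L2 / \<delta>) * \<sigma>\<^sup>2)"
    unfolding L2_def by (rule expected_recursion[OF \<delta>]) (rule Li_smooth)
  then show ?thesis
    unfolding Let_def moments_of_law[OF law(1,2)] Lt
    by (rule order_trans) (intro add_mono mult_right_mono ennreal_leI coeff; simp)
qed

end
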